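(* Fix $\alpha\in(0,1)$ and an integer $d\ge1$, and define \[ \gamma^L_0(t_1,t_2,\alpha)=\frac{(t_1-d)\,t_2}{\left(\frac{\alpha^2}{t_2+1}\right)^{\frac{1}{t_1-d+1}}(t_2+1)-1}-(t_1-d). \] Suppose $t_1,t_2\to\infty$ and there exist constants $0<r<R<\infty$ with $r\le t_1/t_2\le R$. Then $\gamma^L_0(t_1,t_2,\alpha)=2\log(1/\alpha)+\log(t_2+1)+o(1)$. *)

theory Defs
  imports "HOL-Analysis.Analysis"
begin

definition gammaL0 :: "nat \<Rightarrow> real \<Rightarrow> real \<Rightarrow> real \<Rightarrow> real" where
  "gammaL0 d t1 t2 \<alpha> =
     (t1 - real d) * t2 /
       ((\<alpha>\<^sup>2 / (t2 + 1)) powr (1 / (t1 - real d + 1)) * (t2 + 1) - 1)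
     - (t1 - real d)"

end

theory Submission
  imports Defs "HOL-Real_Asymp.Real_Asymp"
begin

(* With K = 2 ln(1/alpha) + ln(t2 + 1) and v = K / (t1 - d + 1), the power in gammaL0 is exp(-v), so
   gammaL0 = (t1 - d) (e^v - 1) (t2 + 1) / (t2 + 1 - e^v).  On the cone t1 >= r t2 the exponent
   v = O(log t2 / t2) tends to 0, and e^v = 1 + v + O(v^2) gives gammaL0 = K + O(K v + K / t2 + v). *)

lemma gammaL0_exp_form:
  fixes \<alpha> t1 t2 :: real and d :: nat
  defines "v \<equiv> (2 * ln (1 / \<alpha>) + ln (t2 + 1)) / (t1 - real d + 1)"
  assumes "0 < \<alpha>" "-1 < t2" "exp v \<noteq> t2 + 1"
  shows "gammaL0 d t1 t2 \<alpha> = (t1 - real d) * (exp v - 1) * (t2 + 1) / (t2 + 1 - exp v)"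
proof -
  have "ln (\<alpha>\<^sup>2 / (t2 + 1)) = - (2 * ln (1 / \<alpha>) + ln (t2 + 1))"
    using assms(2,3) by (simp add: ln_div ln_mult power2_eq_square)
  then have "(\<alpha>\<^sup>2 / (t2 + 1)) powr (1 / (t1 - real d + 1)) = exp (- v)"
    using assms(2,3) by (simp add: powr_def v_def minus_divide_left del: minus_divide_left[symmetric])
  then have "gammaL0 d t1 t2 \<alpha> = (t1 - real d) * t2 / (exp (- v) * (t2 + 1) - 1) - (t1 - real d)"
    by (simp add: gammaL0_def)
  also have "exp (- v) * (t2 + 1) - 1 = (t2 + 1 - exp v) / exp v"
    by (simp add: exp_minus field_simps)
  finally show ?thesis
    using assms(4) by (simp add: field_simps)
qed

lemma exp_quotient_approx:
  fixes n v m :: real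
  assumes n: "0 \<le> n" and v: "0 \<le> v" "v \<le> 1" and m: "6 \<le> m"
  shows "\<bar>n * (exp v - 1) * m / (m - exp v) - (n + 1) * v\<bar>
           \<le> (1 + 2 * ((n + 1) * v)) * v + 6 * ((n + 1) * v) / m"
proof -
  have exp_v: "exp v \<le> 3"
    using v exp_le by (meson exp_le_cancel_iff order_trans)
  define D where "D = m - exp v"
  have D: "m / 2 \<le> D" "0 < D"
    using exp_v m by (auto simp: D_def)
  have m_eq: "m = D + exp v"
    by (simp add: D_def)
  \<comment> \<open>A Taylor remainder, a correction for the denominator D instead of m, and \<open>- v\<close>\<close>
  define A where "A = n * (exp v - 1 - v) * (m / D)"
  define E where "E = n * v * exp v / D"
  have split: "n * (exp v - 1) * m / (m - exp v) - (n + 1) * v = A + E - v"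
    unfolding D_def[symmetric] A_def E_def using D by (simp add: field_simps m_eq)
  have "0 \<le> exp v - 1 - v" "exp v - 1 - v \<le> v\<^sup>2"
    using exp_ge_add_one_self[of v] exp_bound[OF v] by linarith+
  moreover have "0 \<le> m / D" "m / D \<le> 2"
    using D m by (simp_all add: field_simps)
  ultimately have "0 \<le> A" "A \<le> n * v\<^sup>2 * 2"
    unfolding A_def using n by (auto intro!: mult_mono simp del: times_divide_eq_right)
  moreover have "n * v\<^sup>2 * 2 \<le> 2 * ((n + 1) * v) * v"
    by (simp add: power2_eq_square algebra_simps)
  ultimately have A: "0 \<le> A" "A \<le> 2 * ((n + 1) * v) * v"
    by linarith+
  have "E \<le> n * v * 3 / (m / 2)"
    unfolding E_def using n v m D exp_v by (intro frac_le mult_left_mono) auto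
  also have "\<dots> = 6 * (n * v) / m"
    by simp
  also have "\<dots> \<le> 6 * ((n + 1) * v) / m"
    using v m by (intro divide_right_mono) (auto simp: algebra_simps)
  finally have E: "0 \<le> E" "E \<le> 6 * ((n + 1) * v) / m"
    unfolding E_def using n v D by auto
  show ?thesis
    unfolding split using A E v by (simp add: abs_le_iff algebra_simps)
qed

lemma gammaL0_error_bound:
  fixes \<alpha> r t1 t2 :: real and d :: nat
  defines "K \<equiv> 2 * ln (1 / \<alpha>) + ln (t2 + 1)"
  defines "w \<equiv> K / (r * t2 - real d + 1)"
  assumes \<alpha>: "0 < \<alpha>" "\<alpha> < 1" and t2: "5 \<le> t2"
    and cone: "real d \<le> r * t2" "r * t2 \<le> t1" and "w \<le> 1"
  shows "\<bar>gammaL0 d t1 t2 \<alpha> - K\<bar> \<le> (1 + 2 * K) * w + 6 * K / (t2 + 1)"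
proof -
  define n where "n = t1 - real d"
  define v where "v = K / (n + 1)"
  have "0 < ln (1 / \<alpha>)" "0 < ln (t2 + 1)"
    using \<alpha> t2 by simp_all
  then have K: "0 \<le> K"
    by (simp add: K_def)
  have n: "0 \<le> n"
    using cone by (simp add: n_def)
  have K_eq: "K = (n + 1) * v"
    using n by (simp add: v_def)
  have v: "0 \<le> v" "v \<le> w"
    unfolding v_def w_def using K n cone by (auto intro!: divide_left_mono simp: n_def)
  have "exp v \<le> exp 1"
    using v \<open>w \<le> 1\<close> by simp
  then have "exp v \<noteq> t2 + 1"
    using exp_le t2 by linarith
  then have "gammaL0 d t1 t2 \<alpha> = n * (exp v - 1) * (t2 + 1) / (t2 + 1 - exp v)"
    using gammaL0_exp_form[of \<alpha> t2 t1 d] \<alpha> t2 by (simp add: v_def K_def n_def)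
  then have "\<bar>gammaL0 d t1 t2 \<alpha> - K\<bar> \<le> (1 + 2 * K) * v + 6 * K / (t2 + 1)"
    using exp_quotient_approx[of n v "t2 + 1"] n v \<open>w \<le> 1\<close> t2 by (simp add: K_eq)
  also have "\<dots> \<le> (1 + 2 * K) * w + 6 * K / (t2 + 1)"
    using K v by (simp add: mult_left_mono)
  finally show ?thesis .
qed

lemma eventually_cone_at_top:
  fixes r R :: real
  assumes "eventually P at_top"
  shows "eventually (\<lambda>(t1, t2). P t2 \<and> r * t2 \<le> t1)
           (inf (at_top \<times>\<^sub>F at_top) (principal {(t1, t2). r \<le> t1 / t2 \<and> t1 / t2 \<le> R}))"
proof -
  have "eventually (\<lambda>t. P t \<and> 0 < t) at_top"
    using assms eventually_gt_at_top by (rule eventually_conj)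
  then have "eventually (\<lambda>(t1::real, t2). P t2 \<and> 0 < t2) (at_top \<times>\<^sub>F at_top)"
    by (simp add: eventually_prod2)
  then show ?thesis
    by (auto simp: eventually_inf_principal pos_le_divide_eq elim!: eventually_mono)
qed

theorem proposition2:
  fixes \<alpha> r R :: real and d :: nat
  assumes "0 < \<alpha>" "\<alpha> < 1" "d \<ge> 1" "0 < r" "r < R"
  shows "((\<lambda>(t1, t2). gammaL0 d t1 t2 \<alpha> - (2 * ln (1 / \<alpha>) + ln (t2 + 1))) \<longlongrightarrow> 0)
           (inf (at_top \<times>\<^sub>F at_top)
                (principal {(t1, t2). r \<le> t1 / t2 \<and> t1 / t2 \<le> R}))"
proof -
  define F :: "(real \<times> real) filter"
    where "F = inf (at_top \<times>\<^sub>F at_top) (principal {(t1, t2). r \<le> t1 / t2 \<and> t1 / t2 \<le> R})"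
  define K where "K t = 2 * ln (1 / \<alpha>) + ln (t + 1)" for t :: real
  define w where "w t = K t / (r * t - real d + 1)" for t
  define B where "B t = (1 + 2 * K t) * w t + 6 * K t / (t + 1)" for t
  have "(w \<longlongrightarrow> 0) at_top" "(B \<longlongrightarrow> 0) at_top"
    unfolding B_def w_def K_def using \<open>0 < r\<close> by real_asymp+
  have "eventually (\<lambda>t. w t < 1) at_top"
    using \<open>(w \<longlongrightarrow> 0) at_top\<close> by (rule order_tendstoD) simp
  with eventually_ge_at_top[of 5] eventually_ge_at_top[of "real d / r"]
  have "eventually (\<lambda>t. 5 \<le> t \<and> real d \<le> r * t \<and> w t \<le> 1) at_top"
    by eventually_elim (use \<open>0 < r\<close> in \<open>simp add: field_simps\<close>)
  then have "eventually (\<lambda>p. norm ((\<lambda>(t1, t2). gammaL0 d t1 t2 \<alpha> - K t2) p) \<le> B (snd p)) F"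
    unfolding F_def by (rule eventually_mono[OF eventually_cone_at_top])
      (auto simp only: B_def w_def K_def real_norm_def case_prod_beta intro!: gammaL0_error_bound assms)
  moreover have "((\<lambda>p. B (snd p)) \<longlongrightarrow> 0) F"
    using \<open>(B \<longlongrightarrow> 0) at_top\<close> filterlim_mono[OF filterlim_snd order_refl inf_le1]
    unfolding F_def by (rule filterlim_compose)
  ultimately show ?thesis
    unfolding F_def[symmetric] K_def by (rule Lim_null_comparison)
qed

end
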